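(* Let $\{0,1\}$ carry the discrete topology and define $f:\mathbb R\times\mathbb R\to\{0,1\}$ by $f(x,y)=1$ if $x-y\in\mathbb Q$ and $f(x,y)=0$ otherwise. Then for every nonempty open $V\subset\mathbb R$ the set-valued mapping $\mathbb R\ni x\mapsto f_x(V)\in 2^{\{0,1\}}$ is lower quasicontinuous, yet there is no point of $\mathbb R\times\mathbb R$ at which $f$ is horizontally quasicontinuous.
   Context: $f_x(y)=f(x,y)$; $2^Z$ is the set of nonempty subsets of $Z$. A set-valued mapping $F:X\to 2^Z$ is lower quasicontinuous (at every point) if for each $x_0\in X$, each neighborhood $U$ of $x_0$ and each open $W\subset Z$ with $F(x_0)\cap W\neq\emptyset$, there is an open $O$ with $\emptyset\neq O\subset U$ and $F(x)\cap W\neq\emptyset$ for all $x\in O$. $f:X\times Y\to Z$ is horizontally quasicontinuous at $(a,b)$ if for each neighborhood $U$ of $a$, $V$ of $b$, $W$ of $f(a,b)$, there are an open $O$ with $\emptyset\neq O\subset U$ and $y\in V$ with $f(O\times\{y\})\subset W$. *)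

theory Defs
  imports "HOL-Analysis.Analysis"
begin

text \<open>Neighbourhoods of x0 are represented by open sets containing x0 (equivalent, since the
  condition is monotone in U).\<close>
definition lower_quasicontinuous :: "'a topology \<Rightarrow> 'b topology \<Rightarrow> ('a \<Rightarrow> 'b set) \<Rightarrow> bool" where
  "lower_quasicontinuous X Z F \<longleftrightarrow>
     (\<forall>x0 \<in> topspace X. \<forall>U W. openin X U \<and> x0 \<in> U \<and> openin Z W \<and> F x0 \<inter> W \<noteq> {} \<longrightarrow>
        (\<exists>G. openin X G \<and> G \<noteq> {} \<and> G \<subseteq> U \<and> (\<forall>x \<in> G. F x \<inter> W \<noteq> {})))"

definition horizontally_quasicontinuous_at ::
  "'a topology \<Rightarrow> 'b topology \<Rightarrow> 'c topology \<Rightarrow> ('a \<times> 'b \<Rightarrow> 'c) \<Rightarrow> 'a \<Rightarrow> 'b \<Rightarrow> bool" where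
  "horizontally_quasicontinuous_at X Y Z f a b \<longleftrightarrow>
     (\<forall>U V W. openin X U \<and> a \<in> U \<and> openin Y V \<and> b \<in> V \<and> openin Z W \<and> f (a, b) \<in> W \<longrightarrow>
        (\<exists>G y. openin X G \<and> G \<noteq> {} \<and> G \<subseteq> U \<and> y \<in> V \<and> f ` (G \<times> {y}) \<subseteq> W))"

end

theory Submission
  imports Defs
begin

(*
  The function f(x,y) = [x - y \<in> \<rat>] is "everywhere oscillating": on every nonempty open
  set of reals, each section y \<mapsto> f(x,y) and each section x \<mapsto> f(x,y) attains both
  values 0 and 1, because every nonempty open set of reals contains rational as well as
  irrational points and the difference x - y is a homeomorphism in each variable.

  The two halves of the theorem then follow from two general observations:
  - a constant set-valued map is trivially lower quasicontinuous, and the map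
    x \<mapsto> f_x(V) is constantly {0,1} for every nonempty open V;
  - a map f : X \<times> Y \<rightarrow> Z is horizontally quasicontinuous at no point (a,b) with {f(a,b)}
    open in Z if no horizontal section x \<mapsto> f(x,y) is constant on a nonempty open set;
    in the discrete space {0,1} every singleton is open.
*)

text \<open>A nonempty open set of reals contains both rational and irrational numbers:
  the rationals are dense, and the rationals are countable while open sets are not.\<close>
lemma open_meets_Rats_and_irrationals:
  fixes T :: "real set"
  assumes "open T" "T \<noteq> {}"
  shows "(\<exists>q\<in>T. q \<in> \<rat>) \<and> (\<exists>r\<in>T. r \<notin> \<rat>)"
proof
  have "T \<inter> closure \<rat> \<noteq> {}" using assms(2) by (simp add: Rats_closure_real)
  then show "\<exists>q\<in>T. q \<in> \<rat>"
    using open_Int_closure_eq_empty[OF assms(1)] by blast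
  show "\<exists>r\<in>T. r \<notin> \<rat>"
    using open_minus_countable[OF countable_rat assms(2,1)] .
qed

lemma open_meets_rational_and_irrational_differences:
  fixes S :: "real set" and x :: real
  assumes "open S" "S \<noteq> {}"
  shows "(\<exists>y\<in>S. x - y \<in> \<rat>) \<and> (\<exists>y\<in>S. x - y \<notin> \<rat>)"
proof -
  have "(\<lambda>y. x - y) ` S = (\<lambda>y. x + y) ` uminus ` S" by (auto simp: image_image)
  then have "open ((\<lambda>y. x - y) ` S)"
    using assms(1) by (simp add: open_negations open_translation)
  then show ?thesis
    using open_meets_Rats_and_irrationals[of "(\<lambda>y. x - y) ` S"] assms(2) by auto
qed

text \<open>A constant set-valued map is lower quasicontinuous: the witness open set is U itself,
  which is nonempty because it contains x0.\<close>
lemma lower_quasicontinuous_const: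
  "lower_quasicontinuous X Z (\<lambda>x. A)"
  unfolding lower_quasicontinuous_def by blast

text \<open>If the singleton {f(a,b)} is open and no horizontal section of f is constant on a
  nonempty open set, then f is not horizontally quasicontinuous at (a,b): choosing U, V the
  whole spaces and W = {f(a,b)} would yield such a constant section.\<close>
lemma not_horizontally_quasicontinuous_at:
  assumes "a \<in> topspace X" "b \<in> topspace Y" "openin Z {f (a, b)}"
    and nowhere_const: "\<And>G y. openin X G \<Longrightarrow> G \<noteq> {} \<Longrightarrow> \<exists>x\<in>G. f (x, y) \<noteq> f (a, b)"
  shows "\<not> horizontally_quasicontinuous_at X Y Z f a b"
proof
  assume "horizontally_quasicontinuous_at X Y Z f a b"
  then obtain G y where "openin X G" "G \<noteq> {}" "f ` (G \<times> {y}) \<subseteq> {f (a, b)}"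
    using assms(1-3) unfolding horizontally_quasicontinuous_at_def
    by (meson openin_topspace singletonI)
  with nowhere_const show False by blast
qed

theorem mainTheorem2:
  fixes f :: "real \<times> real \<Rightarrow> nat"
  assumes f_def: "\<And>x y. f (x, y) = (if x - y \<in> \<rat> then 1 else 0)"
  shows "(\<forall>V. open V \<and> V \<noteq> {} \<longrightarrow>
            lower_quasicontinuous euclideanreal (discrete_topology {0, 1})
              (\<lambda>x. (\<lambda>y. f (x, y)) ` V))
       \<and> \<not> (\<exists>a b. horizontally_quasicontinuous_at euclideanreal euclideanreal
                   (discrete_topology {0, 1}) f a b)"
proof (intro conjI allI impI notI)
  fix V :: "real set" assume V: "open V \<and> V \<noteq> {}"
  have "(\<lambda>y. f (x, y)) ` V = {0, 1}" for x
    using open_meets_rational_and_irrational_differences[of V x] V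
    by (auto simp: f_def image_iff)
  then have "(\<lambda>x. (\<lambda>y. f (x, y)) ` V) = (\<lambda>x. {0, 1})" by (intro ext)
  then show "lower_quasicontinuous euclideanreal (discrete_topology {0, 1})
               (\<lambda>x. (\<lambda>y. f (x, y)) ` V)"
    by (simp only: lower_quasicontinuous_const)
next
  assume "\<exists>a b. horizontally_quasicontinuous_at euclideanreal euclideanreal
                   (discrete_topology {0, 1}) f a b"
  then obtain a b where hq: "horizontally_quasicontinuous_at euclideanreal euclideanreal
                   (discrete_topology {0, 1}) f a b" by blast
  have singleton_open: "openin (discrete_topology {0, 1}) {f (a, b)}" by (simp add: f_def)
  have nowhere_const: "\<exists>x\<in>G. f (x, y) \<noteq> f (a, b)" if "open G" "G \<noteq> {}" for G y
  proof -
    have "x - y \<in> \<rat> \<longleftrightarrow> y - x \<in> \<rat>" for x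
      using Rats_minus_iff[of "y - x"] by simp
    then show ?thesis
      using open_meets_rational_and_irrational_differences[of G y] that by (auto simp: f_def)
  qed
  show False
    using not_horizontally_quasicontinuous_at[of a euclideanreal b euclideanreal,
          OF _ _ singleton_open nowhere_const] hq by simp
qed

end
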